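(* Let $d\ge0$, $n\ge d+1$. There is a Zariski-open dense subset $U\subset\mathbb{R}^n\times\mathbb{R}^{n-d}$ such that the restriction of the higher Prony map $\Phi_{d,n}$ to $U\cap\{x_1<\cdots<x_n,\ \alpha_i\ne0\ \forall i\}$ is injective. Moreover, for $(x,\alpha)$ in this set and $M=\Phi_{d,n}(x,\alpha)$: the Hankel matrix $H_M$ has one-dimensional kernel; the roots of its kernel polynomial $p_M$ are $x_1,\dots,x_n$; and $\alpha$ is the unique solution of the square linear system $A_{d,n}(\mathcal{X})\alpha=b(M)$, where $b(M)=(\binom{r+d}{d}m_r)_{0\le r\le n-d-1}$. Furthermore, $\sum_i\alpha_i\mu_{(x_i,\dots,x_{i+d})}$ lies in the positive simplicial spline cone iff $A_{d,n}(\mathcal{X})^{-1}b(M)$ has nonnegative coordinates.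
   Context: $\mu_V$ for a list $V=(v_1,\dots,v_{d+1})$ is the law of $\sum_k\lambda_kv_k$ with $\lambda$ uniform on the standard simplex $\{\lambda\in\mathbb{R}^{d+1}_{\ge0}:\sum\lambda_k=1\}$. The positive simplicial spline cone for $\mathcal{X}=\{x_1,\dots,x_n\}$ is $\{\sum_i\beta_i\mu_{(x_i,\dots,x_{i+d})}:\beta_i\ge0\}$. The higher Prony map $\Phi_{d,n}:\mathbb{R}^n\times\mathbb{R}^{n-d}\to\mathbb{R}^{2n-d}$ sends $(x;\alpha)$ to $M=(m_0,\dots,m_{2n-d-1})$ with $m_j=\binom{j+d}{d}^{-1}\sum_{i=1}^{n-d}\alpha_ih_j(x_i,\dots,x_{i+d})$, $h_j$ the complete homogeneous symmetric polynomial. Normalized sequence: $c_0=\cdots=c_{d-1}=0$, $c_{d+i}=\binom{i+d}{d}m_i$. $H_M=(c_{i+j})_{0\le i\le n-1,\,0\le j\le n}$; the kernel polynomial is $p_M(t)=\sum_{k=0}^nu_kt^k$ for $(u_0,\dots,u_n)$ spanning $\ker H_M$. $A_{d,n}(\mathcal{X})=(h_r(x_i,\dots,x_{i+d}))_{0\le r\le n-d-1,\,1\le i\le n-d}$. *)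

theory Defs
  imports "HOL-Probability.Probability" "HOL-Computational_Algebra.Polynomial"
begin

text \<open>Conventions: indices are 0-based. A point x of R^n is a real list of length n,
  alpha in R^(n-d) a real list of length n-d.\<close>

text \<open>Complete homogeneous symmetric polynomial h_j evaluated at a list of reals.\<close>
fun hcomp :: "nat \<Rightarrow> real list \<Rightarrow> real" where
  "hcomp j [] = (if j = 0 then 1 else 0)"
| "hcomp j (a # xs) = (\<Sum>k\<le>j. a ^ k * hcomp (j - k) xs)"

definition window :: "real list \<Rightarrow> nat \<Rightarrow> nat \<Rightarrow> real list" where
  "window x d i = take (Suc d) (drop i x)"

definition prony_moment :: "nat \<Rightarrow> real list \<Rightarrow> real list \<Rightarrow> nat \<Rightarrow> real" where
  "prony_moment d x \<alpha> j =
     (\<Sum>i<length \<alpha>. \<alpha> ! i * hcomp j (window x d i)) / real ((j + d) choose d)"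

definition prony_map :: "nat \<Rightarrow> nat \<Rightarrow> real list \<Rightarrow> real list \<Rightarrow> real list" where
  "prony_map d n x \<alpha> = map (prony_moment d x \<alpha>) [0..<2 * n - d]"

definition norm_seq :: "nat \<Rightarrow> real list \<Rightarrow> nat \<Rightarrow> real" where
  "norm_seq d M k = (if k < d then 0 else real (k choose d) * M ! (k - d))"

definition hankel_kernel :: "nat \<Rightarrow> nat \<Rightarrow> real list \<Rightarrow> real list set" where
  "hankel_kernel d n M = {u. length u = Suc n \<and>
      (\<forall>i<n. (\<Sum>j\<le>n. norm_seq d M (i + j) * u ! j) = 0)}"

definition spline_A :: "nat \<Rightarrow> real list \<Rightarrow> nat \<Rightarrow> nat \<Rightarrow> real" where
  "spline_A d x r i = hcomp r (window x d i)"

definition b_vec :: "nat \<Rightarrow> real list \<Rightarrow> nat \<Rightarrow> real" where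
  "b_vec d M r = real ((r + d) choose d) * M ! r"

definition solves_system :: "nat \<Rightarrow> nat \<Rightarrow> real list \<Rightarrow> real list \<Rightarrow> real list \<Rightarrow> bool" where
  "solves_system d n x M \<beta> \<longleftrightarrow> length \<beta> = n - d \<and>
     (\<forall>r<n - d. (\<Sum>i<n - d. spline_A d x r i * \<beta> ! i) = b_vec d M r)"

inductive_set poly_fun :: "nat \<Rightarrow> (real list \<Rightarrow> real) set" for N :: nat where
  const: "(\<lambda>v. c) \<in> poly_fun N"
| var: "i < N \<Longrightarrow> (\<lambda>v. v ! i) \<in> poly_fun N"
| add: "f \<in> poly_fun N \<Longrightarrow> g \<in> poly_fun N \<Longrightarrow> (\<lambda>v. f v + g v) \<in> poly_fun N"
| mult: "f \<in> poly_fun N \<Longrightarrow> g \<in> poly_fun N \<Longrightarrow> (\<lambda>v. f v * g v) \<in> poly_fun N"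

definition affine_space :: "nat \<Rightarrow> real list set" where
  "affine_space N = {v. length v = N}"

definition zariski_closed :: "nat \<Rightarrow> real list set \<Rightarrow> bool" where
  "zariski_closed N C \<longleftrightarrow> (\<exists>S \<subseteq> poly_fun N. C = {v \<in> affine_space N. \<forall>f\<in>S. f v = 0})"

definition zariski_open :: "nat \<Rightarrow> real list set \<Rightarrow> bool" where
  "zariski_open N U \<longleftrightarrow> U \<subseteq> affine_space N \<and> zariski_closed N (affine_space N - U)"

definition zariski_dense :: "nat \<Rightarrow> real list set \<Rightarrow> bool" where
  "zariski_dense N U \<longleftrightarrow> (\<forall>C. zariski_closed N C \<and> U \<subseteq> C \<longrightarrow> C = affine_space N)"

text \<open>R^n x R^(n-d), identified with R^(2n-d) via concatenation.\<close>
definition pair_space :: "nat \<Rightarrow> nat \<Rightarrow> (real list \<times> real list) set" where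
  "pair_space d n = {(x, \<alpha>). length x = n \<and> length \<alpha> = n - d}"

definition zariski_open_dense_pairs :: "nat \<Rightarrow> nat \<Rightarrow> (real list \<times> real list) set \<Rightarrow> bool" where
  "zariski_open_dense_pairs d n U \<longleftrightarrow> U \<subseteq> pair_space d n \<and>
     zariski_open (2 * n - d) ((\<lambda>(x, \<alpha>). x @ \<alpha>) ` U) \<and>
     zariski_dense (2 * n - d) ((\<lambda>(x, \<alpha>). x @ \<alpha>) ` U)"

text \<open>mu_V: law of sum lambda_k v_k with lambda uniform on the standard simplex in R^(d+1);
  the simplex is parametrised by its first d coordinates (lambda_(d+1) = 1 - sum).\<close>
definition simplex_param :: "nat \<Rightarrow> (nat \<Rightarrow> real) set" where
  "simplex_param d = {l \<in> PiE {..<d} (\<lambda>_. UNIV). (\<forall>k<d. 0 \<le> l k) \<and> (\<Sum>k<d. l k) \<le> 1}"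

definition simplex_measure :: "nat \<Rightarrow> real list \<Rightarrow> real measure" where
  "simplex_measure d V = distr (uniform_measure (PiM {..<d} (\<lambda>_. lborel)) (simplex_param d)) borel
      (\<lambda>l. (\<Sum>k<d. l k * V ! k) + (1 - (\<Sum>k<d. l k)) * V ! d)"

definition spline_combination :: "nat \<Rightarrow> real list \<Rightarrow> real list \<Rightarrow> real set \<Rightarrow> real" where
  "spline_combination d x \<alpha> A = (\<Sum>i<length \<alpha>. \<alpha> ! i * measure (simplex_measure d (window x d i)) A)"

definition in_spline_cone :: "nat \<Rightarrow> real list \<Rightarrow> (real set \<Rightarrow> real) \<Rightarrow> bool" where
  "in_spline_cone d x \<nu> \<longleftrightarrow> (\<exists>\<beta>. length \<beta> = length x - d \<and> (\<forall>i<length \<beta>. 0 \<le> \<beta> ! i) \<and>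
      (\<forall>A\<in>sets borel. \<nu> A = spline_combination d x \<beta> A))"

end

theory Submission
  imports Defs
begin

text \<open>For a window V of d + 1 distinct nodes, h_r(V) is the divided difference of t^(r+d) on V,
  i.e. the sum of y^(r+d) / \<Prod>(y - z) over y \<in> V. Hence the normalised moments c_k of
  \<Phi>(x, \<alpha>) are power sums \<Sum> w(y) y^k over the n nodes, with weights w(y) that depend
  linearly and triangularly on \<alpha>. When all weights are nonzero, a Vandermonde argument shows
  that H_M u = 0 exactly when the polynomial with coefficients u vanishes at the nodes, so the
  kernel is spanned by the coefficients of \<Prod>(t - x_l); triangularity makes A \<alpha> = b(M) uniquely
  solvable. The set U is the nonvanishing locus of the product of the weights with denominators
  cleared, a polynomial which is nonzero at an explicit point. Finally, the measure of window i
  charges (-\<infinity>, x_(i+1)) while the later windows do not, so the simplicial measures are linearly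
  independent and membership in the cone means \<alpha> \<ge> 0.\<close>

section \<open>Divided differences of powers\<close>

definition divdiff_power :: "real set \<Rightarrow> nat \<Rightarrow> real" where
  "divdiff_power X k = (\<Sum>y\<in>X. y ^ k / (\<Prod>z\<in>X - {y}. y - z))"

lemma divdiff_power_singleton [simp]: "divdiff_power {a} k = a ^ k"
  by (simp add: divdiff_power_def)

lemma divdiff_power_insert_Suc:
  assumes "finite X" "a \<notin> X"
  shows "divdiff_power (insert a X) (Suc k) = a * divdiff_power (insert a X) k + divdiff_power X k"
proof -
  have "divdiff_power (insert a X) (Suc k) - a * divdiff_power (insert a X) k =
        (\<Sum>y\<in>insert a X. y ^ k * (y - a) / (\<Prod>z\<in>insert a X - {y}. y - z))"
    unfolding divdiff_power_def sum_distrib_left sum_subtractf[symmetric]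
    by (rule sum.cong) (auto simp: diff_divide_distrib[symmetric] algebra_simps)
  also have "\<dots> = (\<Sum>y\<in>X. y ^ k * (y - a) / (\<Prod>z\<in>insert a X - {y}. y - z))"
    using assms by simp
  also have "\<dots> = divdiff_power X k"
    unfolding divdiff_power_def
  proof (rule sum.cong)
    fix y assume y: "y \<in> X"
    with assms have "insert a X - {y} = insert a (X - {y})" "y \<noteq> a" by auto
    with assms show "y ^ k * (y - a) / (\<Prod>z\<in>insert a X - {y}. y - z) = y ^ k / (\<Prod>z\<in>X - {y}. y - z)"
      by simp
  qed simp
  finally show ?thesis by simp
qed

lemma divdiff_power_insert_insert:
  assumes "finite Y" "a \<notin> Y" "b \<notin> Y" "a \<noteq> b"
  shows "(a - b) * divdiff_power (insert a (insert b Y)) k =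
         divdiff_power (insert a Y) k - divdiff_power (insert b Y) k"
proof -
  have "divdiff_power (insert a (insert b Y)) (Suc k) =
        a * divdiff_power (insert a (insert b Y)) k + divdiff_power (insert b Y) k"
    using assms by (intro divdiff_power_insert_Suc) auto
  moreover have "divdiff_power (insert b (insert a Y)) (Suc k) =
        b * divdiff_power (insert b (insert a Y)) k + divdiff_power (insert a Y) k"
    using assms by (intro divdiff_power_insert_Suc) auto
  ultimately show ?thesis by (simp add: insert_commute algebra_simps)
qed

lemma divdiff_power_0:
  assumes "finite X" "card X \<ge> 2"
  shows "divdiff_power X 0 = 0"
  using assms
proof (induction "card X" arbitrary: X rule: less_induct)
  case less
  obtain a b Y where X: "X = insert a (insert b Y)" and Y: "finite Y" "a \<notin> Y" "b \<notin> Y" "a \<noteq> b"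
    using less.prems by (metis card_le_Suc_iff numeral_2_eq_2 insert_iff)
  have split: "(a - b) * divdiff_power X 0 = divdiff_power (insert a Y) 0 - divdiff_power (insert b Y) 0"
    unfolding X by (rule divdiff_power_insert_insert[OF Y])
  show ?case
  proof (cases "Y = {}")
    case True
    then show ?thesis using split Y by simp
  next
    case False
    then have "card Y \<ge> 1" using Y by (simp add: Suc_leI card_gt_0_iff)
    then have "divdiff_power (insert a Y) 0 = 0" "divdiff_power (insert b Y) 0 = 0"
      using Y X by (auto intro!: less.hyps)
    then show ?thesis using split Y by simp
  qed
qed

lemma hcomp_0 [simp]: "hcomp 0 xs = 1"
  by (induction xs) auto

lemma hcomp_singleton: "hcomp j [a] = a ^ j"
proof -
  have "hcomp j [a] = (\<Sum>k\<le>j. if k = j then a ^ k else 0)"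
    by (simp del: sum.delta) (rule sum.cong, auto)
  then show ?thesis by simp
qed

lemma hcomp_Suc_Cons: "hcomp (Suc j) (a # xs) = a * hcomp j (a # xs) + hcomp (Suc j) xs"
proof -
  have "hcomp (Suc j) (a # xs) = hcomp (Suc j) xs + (\<Sum>k\<le>j. a ^ Suc k * hcomp (j - k) xs)"
    by (simp only: hcomp.simps sum.atMost_Suc_shift) simp
  also have "(\<Sum>k\<le>j. a ^ Suc k * hcomp (j - k) xs) = a * hcomp j (a # xs)"
    by (simp add: sum_distrib_left mult.assoc)
  finally show ?thesis by simp
qed

lemma divdiff_power_eq_hcomp:
  assumes "distinct V" "V \<noteq> []"
  shows "divdiff_power (set V) k = (if k + 1 < length V then 0 else hcomp (k + 1 - length V) V)"
  using assms
proof (induction V arbitrary: k)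
  case Nil
  then show ?case by simp
next
  case (Cons a xs)
  show ?case
  proof (cases "xs = []")
    case True
    then show ?thesis by (simp add: hcomp_singleton del: hcomp.simps)
  next
    case False
    have IH: "divdiff_power (set xs) k = (if k + 1 < length xs then 0 else hcomp (k + 1 - length xs) xs)" for k
      using Cons False by simp
    have "a \<notin> set xs" using Cons.prems by simp
    show ?thesis
    proof (induction k)
      case 0
      have "card (set (a # xs)) \<ge> 2"
        using Cons.prems False by (simp add: distinct_card Suc_le_eq)
      then show ?case using False by (simp add: divdiff_power_0)
    next
      case (Suc k)
      have "divdiff_power (set (a # xs)) (Suc k) = a * divdiff_power (set (a # xs)) k + divdiff_power (set xs) k"
        using \<open>a \<notin> set xs\<close> by (simp add: divdiff_power_insert_Suc)
      also have "\<dots> = (if Suc k + 1 < length (a # xs) then 0 else hcomp (Suc k + 1 - length (a # xs)) (a # xs))"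
      proof (cases "k < length xs")
        case True
        then show ?thesis using Suc IH by (auto simp del: hcomp.simps)
      next
        case False
        then have "Suc k + 1 - length (a # xs) = Suc (k - length xs)" "k + 1 - length (a # xs) = k - length xs"
          by auto
        then show ?thesis using Suc IH False by (simp add: hcomp_Suc_Cons Suc_diff_le del: hcomp.simps)
      qed
      finally show ?case .
    qed
  qed
qed

section \<open>Polynomials vanishing on a finite set\<close>

lemma poly_Poly_eq_sum: "poly (Poly u) (y::'a::comm_semiring_1) = (\<Sum>j<length u. u ! j * y ^ j)"
proof (induction u)
  case (Cons a u)
  have "(\<Sum>j<length (a # u). (a # u) ! j * y ^ j) = a + y * (\<Sum>j<length u. u ! j * y ^ j)"
    by (simp only: length_Cons sum.lessThan_Suc_shift) (simp add: sum_distrib_left mult.left_commute)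
  with Cons show ?case by simp
qed simp

lemma power_sums_eq_0_imp_weights_eq_0:
  fixes f :: "'a::idom \<Rightarrow> 'a"
  assumes "finite X" "card X \<le> n" "\<And>k. k < n \<Longrightarrow> (\<Sum>y\<in>X. f y * y ^ k) = 0" "y0 \<in> X"
  shows "f y0 = 0"
proof -
  define q where "q = (\<Prod>z\<in>X - {y0}. [:-z, 1:])"
  have "degree q < n"
    using assms degree_prod_sum_le[of "X - {y0}" "\<lambda>z. [:-z, 1:]"] card_Diff1_less[of X y0]
    unfolding q_def by simp
  have "(\<Sum>y\<in>X. f y * poly q y) = (\<Sum>k\<le>degree q. coeff q k * (\<Sum>y\<in>X. f y * y ^ k))"
    by (simp add: poly_altdef sum_distrib_left sum_distrib_right mult_ac sum.swap[where A = X])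
  also have "\<dots> = 0" using assms(3) \<open>degree q < n\<close> by simp
  finally have "(\<Sum>y\<in>X. f y * poly q y) = 0" .
  moreover have "(\<Sum>y\<in>X. f y * poly q y) = f y0 * poly q y0 + (\<Sum>y\<in>X - {y0}. f y * poly q y)"
    by (rule sum.remove[OF assms(1,4)])
  moreover have "(\<Sum>y\<in>X - {y0}. f y * poly q y) = 0"
    using assms(1) by (intro sum.neutral) (auto simp: q_def poly_prod)
  moreover have "poly q y0 \<noteq> 0" using assms(1) by (simp add: q_def poly_prod)
  ultimately show ?thesis by simp
qed

definition node_poly :: "'a::idom set \<Rightarrow> 'a poly" where
  "node_poly X = (\<Prod>y\<in>X. [:-y, 1:])"

lemma poly_node_poly: "poly (node_poly X) t = (\<Prod>y\<in>X. t - y)"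
  by (simp add: node_poly_def poly_prod)

lemma node_poly_nonzero: "node_poly X \<noteq> 0"
  by (cases "finite X") (simp_all add: node_poly_def prod_zero_iff)

lemma degree_node_poly: "finite X \<Longrightarrow> degree (node_poly X) = card X"
  unfolding node_poly_def by (subst degree_prod_sum_eq) simp_all

lemma lead_coeff_node_poly: "lead_coeff (node_poly X) = 1"
  by (simp add: node_poly_def lead_coeff_prod)

definition vanishing_coeffs :: "nat \<Rightarrow> 'a::idom set \<Rightarrow> 'a list set" where
  "vanishing_coeffs n X = {u. length u = Suc n \<and> (\<forall>y\<in>X. poly (Poly u) y = 0)}"

lemma Poly_vanishing_coeffs:
  assumes "finite X" "card X = n" "u \<in> vanishing_coeffs n X"
  shows "Poly u = smult (u ! n) (node_poly X)"
proof (rule poly_eqI_degree_lead_coeff[where n = n and A = X])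
  show "coeff (Poly u) n = coeff (smult (u ! n) (node_poly X)) n"
    using assms lead_coeff_node_poly[of X] degree_node_poly[of X]
    by (simp add: vanishing_coeffs_def nth_default_def)
  show "degree (Poly u) \<le> n"
    using assms by (intro degree_le) (simp add: vanishing_coeffs_def nth_default_def)
  show "degree (smult (u ! n) (node_poly X)) \<le> n"
    using assms degree_node_poly[of X] by simp
  show "poly (Poly u) y = poly (smult (u ! n) (node_poly X)) y" if "y \<in> X" for y
    using assms that by (simp add: vanishing_coeffs_def poly_node_poly)
qed (use assms in simp)

lemma vanishing_coeffs_eq_smult:
  assumes "finite X" "card X = n" "u \<in> vanishing_coeffs n X"
  shows "u = map (\<lambda>a. u ! n * a) (coeffs (node_poly X))"
proof (rule nth_equalityI)
  have len: "length (coeffs (node_poly X)) = Suc n"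
    using length_coeffs_degree[OF node_poly_nonzero[of X]] degree_node_poly[OF assms(1)] assms(2) by simp
  then show "length u = length (map (\<lambda>a. u ! n * a) (coeffs (node_poly X)))"
    using assms by (simp add: vanishing_coeffs_def)
  fix j assume "j < length u"
  then have "u ! j = coeff (Poly u) j" by (simp add: nth_default_def)
  also have "\<dots> = u ! n * coeff (node_poly X) j" using Poly_vanishing_coeffs[OF assms] by simp
  finally show "u ! j = map (\<lambda>a. u ! n * a) (coeffs (node_poly X)) ! j"
    using \<open>j < length u\<close> assms len
    by (simp add: vanishing_coeffs_def coeffs_nth[OF node_poly_nonzero[of X]] degree_node_poly)
qed

lemma vanishing_coeffs_one_dimensional:
  assumes "finite X" "card X = n"
  shows "\<exists>u\<in>vanishing_coeffs n X. u \<noteq> replicate (Suc n) 0 \<and>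
           (\<forall>v\<in>vanishing_coeffs n X. \<exists>t. v = map (\<lambda>a. t * a) u)"
proof (intro bexI conjI ballI)
  let ?u = "coeffs (node_poly X)"
  show "?u \<in> vanishing_coeffs n X"
    using length_coeffs_degree[OF node_poly_nonzero[of X]] degree_node_poly[OF assms(1)] assms
    by (auto simp: vanishing_coeffs_def poly_node_poly)
  show "?u \<noteq> replicate (Suc n) 0"
    using node_poly_nonzero[of X] by (metis Poly_coeffs Poly_eq_0 exI)
  show "\<exists>t. v = map (\<lambda>a. t * a) ?u" if "v \<in> vanishing_coeffs n X" for v
    using vanishing_coeffs_eq_smult[OF assms that] by blast
qed

lemma roots_vanishing_coeffs:
  assumes "finite X" "card X = n" "u \<in> vanishing_coeffs n X" "u \<noteq> replicate (Suc n) 0"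
  shows "{t. poly (Poly u) t = 0} = X"
proof -
  have "u ! n \<noteq> 0"
  proof
    assume "u ! n = 0"
    then obtain m where "u = replicate m 0"
      using Poly_vanishing_coeffs[OF assms(1-3)] Poly_eq_0 by auto
    then show False using assms(3,4) by (simp add: vanishing_coeffs_def)
  qed
  then show ?thesis
    using Poly_vanishing_coeffs[OF assms(1-3)] assms(1) by (auto simp: poly_node_poly)
qed

section \<open>Moments of the Prony map as power sums\<close>

lemma length_window: "i + d < length x \<Longrightarrow> length (window x d i) = Suc d"
  by (simp add: window_def)

lemma distinct_window: "distinct x \<Longrightarrow> distinct (window x d i)"
  by (simp add: window_def)

lemma nth_window: "i + d < length x \<Longrightarrow> k \<le> d \<Longrightarrow> window x d i ! k = x ! (i + k)"
  by (simp add: window_def)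

lemma set_window_subset: "set (window x d i) \<subseteq> set x"
  unfolding window_def by (meson set_drop_subset set_take_subset subset_trans)

lemma set_window:
  assumes "i + d < length x"
  shows "set (window x d i) = (\<lambda>m. x ! m) ` {i..i + d}"
proof -
  have "window x d i = map (\<lambda>m. x ! m) [i..<Suc (i + d)]"
    using assms by (intro nth_equalityI) (auto simp: window_def simp del: upt_Suc)
  then show ?thesis by (simp del: upt_Suc add: atLeastLessThanSuc_atLeastAtMost)
qed

lemma nth_mem_set_window_iff:
  assumes "distinct x" "j < length x" "i + d < length x"
  shows "x ! j \<in> set (window x d i) \<longleftrightarrow> i \<le> j \<and> j \<le> i + d"
  using assms nth_eq_iff_index_eq[OF assms(1)] by (force simp: set_window)

lemma prod_window_remove_node:
  assumes "distinct x" "i + d < length x" "l \<in> {i..i + d}"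
  shows "(\<Prod>z\<in>set (window x d i) - {x ! l}. x ! l - z) = (\<Prod>m\<in>{i..i + d} - {l}. x ! l - x ! m)"
proof -
  have inj: "inj_on (\<lambda>m. x ! m) {i..i + d}"
    using assms(1,2) by (intro inj_onI) (auto simp: nth_eq_iff_index_eq)
  have "set (window x d i) - {x ! l} = (\<lambda>m. x ! m) ` ({i..i + d} - {l})"
    unfolding set_window[OF assms(2)] by (subst inj_on_image_set_diff[OF inj]) (use assms(3) in auto)
  then show ?thesis using inj by (simp add: prod.reindex inj_on_diff)
qed

lemma divdiff_power_window:
  assumes "distinct x" "i + d < length x"
  shows "divdiff_power (set (window x d i)) k = (if k < d then 0 else hcomp (k - d) (window x d i))"
proof -
  have "length (window x d i) = Suc d" "window x d i \<noteq> []"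
    using length_window[OF assms(2)] by auto
  then show ?thesis
    using divdiff_power_eq_hcomp[of "window x d i" k] distinct_window[OF assms(1)]
    by (simp add: Suc_diff_le not_less)
qed

text \<open>The coefficient of y in the partial-fraction form of the divided differences of the windows
  through y, summed with weights \<alpha> ! i.\<close>
definition prony_weight :: "nat \<Rightarrow> real list \<Rightarrow> real list \<Rightarrow> real \<Rightarrow> real" where
  "prony_weight d x \<alpha> y =
     (\<Sum>i\<in>{i\<in>{..<length \<alpha>}. y \<in> set (window x d i)}. \<alpha> ! i / (\<Prod>z\<in>set (window x d i) - {y}. y - z))"

lemma sum_divdiff_power_windows:
  "(\<Sum>i<length \<alpha>. \<alpha> ! i * divdiff_power (set (window x d i)) k) =
   (\<Sum>y\<in>set x. prony_weight d x \<alpha> y * y ^ k)"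
proof -
  let ?c = "\<lambda>i y. if y \<in> set (window x d i) then \<alpha> ! i / (\<Prod>z\<in>set (window x d i) - {y}. y - z) else 0"
  have "\<alpha> ! i * divdiff_power (set (window x d i)) k = (\<Sum>y\<in>set x. ?c i y * y ^ k)" for i
  proof -
    have "\<alpha> ! i * divdiff_power (set (window x d i)) k =
          (\<Sum>y\<in>set (window x d i). \<alpha> ! i / (\<Prod>z\<in>set (window x d i) - {y}. y - z) * y ^ k)"
      unfolding divdiff_power_def sum_distrib_left by (rule sum.cong) auto
    also have "\<dots> = (\<Sum>y\<in>set x. ?c i y * y ^ k)"
      by (rule sum.mono_neutral_cong_left) (use set_window_subset in auto)
    finally show ?thesis .
  qed
  then have "(\<Sum>i<length \<alpha>. \<alpha> ! i * divdiff_power (set (window x d i)) k) =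
             (\<Sum>y\<in>set x. \<Sum>i<length \<alpha>. ?c i y * y ^ k)"
    by (simp add: sum.swap[where A = "{..<length \<alpha>}"])
  also have "\<dots> = (\<Sum>y\<in>set x. prony_weight d x \<alpha> y * y ^ k)"
    by (simp only: prony_weight_def sum.inter_filter[OF finite_lessThan] sum_distrib_right)
  finally show ?thesis .
qed

lemma norm_seq_prony_map:
  assumes "distinct x" "length x = n" "length \<alpha> = n - d" "k < 2 * n"
  shows "norm_seq d (prony_map d n x \<alpha>) k = (\<Sum>y\<in>set x. prony_weight d x \<alpha> y * y ^ k)"
proof -
  have windows: "i + d < length x" if "i < length \<alpha>" for i
    using assms that by linarith
  have "norm_seq d (prony_map d n x \<alpha>) k = (\<Sum>i<length \<alpha>. \<alpha> ! i * divdiff_power (set (window x d i)) k)"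
  proof (cases "k < d")
    case False
    then have "k - d < 2 * n - d" "k - d + d = k" using assms(4) by linarith+
    then show ?thesis
      using False by (simp add: norm_seq_def prony_map_def prony_moment_def divdiff_power_window[OF assms(1) windows])
  qed (simp add: norm_seq_def divdiff_power_window[OF assms(1) windows])
  then show ?thesis by (simp add: sum_divdiff_power_windows)
qed

lemma hankel_row_prony_map:
  assumes "distinct x" "length x = n" "length \<alpha> = n - d" and len: "length u = Suc n" and "i < n"
  shows "(\<Sum>j\<le>n. norm_seq d (prony_map d n x \<alpha>) (i + j) * u ! j) =
         (\<Sum>y\<in>set x. (prony_weight d x \<alpha> y * poly (Poly u) y) * y ^ i)"
proof -
  have "(\<Sum>j\<le>n. norm_seq d (prony_map d n x \<alpha>) (i + j) * u ! j) =
        (\<Sum>j\<le>n. \<Sum>y\<in>set x. prony_weight d x \<alpha> y * y ^ i * (u ! j * y ^ j))"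
  proof (rule sum.cong)
    fix j assume "j \<in> {..n}"
    then have "i + j < 2 * n" using \<open>i < n\<close> by simp
    then show "norm_seq d (prony_map d n x \<alpha>) (i + j) * u ! j =
               (\<Sum>y\<in>set x. prony_weight d x \<alpha> y * y ^ i * (u ! j * y ^ j))"
      using assms(1-3) by (simp add: norm_seq_prony_map sum_distrib_right power_add) (simp add: mult_ac)
  qed simp
  also have "\<dots> = (\<Sum>y\<in>set x. \<Sum>j\<le>n. prony_weight d x \<alpha> y * y ^ i * (u ! j * y ^ j))"
    by (rule sum.swap)
  also have "\<dots> = (\<Sum>y\<in>set x. (prony_weight d x \<alpha> y * poly (Poly u) y) * y ^ i)"
  proof (rule sum.cong)
    fix y
    have "(\<Sum>j\<le>n. prony_weight d x \<alpha> y * y ^ i * (u ! j * y ^ j)) =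
          prony_weight d x \<alpha> y * y ^ i * (\<Sum>j<length u. u ! j * y ^ j)"
      by (simp add: len lessThan_Suc_atMost sum_distrib_left)
    then show "(\<Sum>j\<le>n. prony_weight d x \<alpha> y * y ^ i * (u ! j * y ^ j)) =
               (prony_weight d x \<alpha> y * poly (Poly u) y) * y ^ i"
      by (simp add: poly_Poly_eq_sum)
  qed simp
  finally show ?thesis .
qed

lemma hankel_kernel_prony_map:
  assumes "distinct x" "length x = n" "length \<alpha> = n - d"
    and weights: "\<forall>y\<in>set x. prony_weight d x \<alpha> y \<noteq> 0"
  shows "hankel_kernel d n (prony_map d n x \<alpha>) = vanishing_coeffs n (set x)"
proof -
  note row = hankel_row_prony_map[OF assms(1-3)]
  have card: "card (set x) = n" using assms distinct_card by blast
  show ?thesis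
  proof (intro set_eqI iffI)
    fix u assume "u \<in> hankel_kernel d n (prony_map d n x \<alpha>)"
    then have len: "length u = Suc n"
      and "\<forall>i<n. (\<Sum>j\<le>n. norm_seq d (prony_map d n x \<alpha>) (i + j) * u ! j) = 0"
      by (simp_all add: hankel_kernel_def)
    then have "(\<Sum>y\<in>set x. (prony_weight d x \<alpha> y * poly (Poly u) y) * y ^ i) = 0" if "i < n" for i
      using row[OF len that] that by simp
    then have "prony_weight d x \<alpha> y * poly (Poly u) y = 0" if "y \<in> set x" for y
      using power_sums_eq_0_imp_weights_eq_0[of "set x" n "\<lambda>y. prony_weight d x \<alpha> y * poly (Poly u) y" y] that card by simp
    with weights len show "u \<in> vanishing_coeffs n (set x)"
      by (simp add: vanishing_coeffs_def)
  next
    fix u assume "u \<in> vanishing_coeffs n (set x)"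
    then have "length u = Suc n" "\<forall>y\<in>set x. poly (Poly u) y = 0"
      by (simp_all add: vanishing_coeffs_def)
    then show "u \<in> hankel_kernel d n (prony_map d n x \<alpha>)"
      by (simp add: hankel_kernel_def row)
  qed
qed

lemma b_vec_eq_norm_seq: "b_vec d M r = norm_seq d M (r + d)"
  by (simp add: b_vec_def norm_seq_def)

lemma solves_system_iff_b_vec:
  "solves_system d n x M \<beta> \<longleftrightarrow>
     length \<beta> = n - d \<and> (\<forall>r<n - d. b_vec d (prony_map d n x \<beta>) r = b_vec d M r)"
proof -
  have "b_vec d (prony_map d n x \<beta>) r = (\<Sum>i<n - d. spline_A d x r i * \<beta> ! i)"
    if "length \<beta> = n - d" "r < n - d" for r
    using that by (simp add: b_vec_def prony_map_def prony_moment_def spline_A_def mult.commute)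
  then show ?thesis by (auto simp: solves_system_def)
qed

text \<open>Triangularity: among the windows through x ! j, window j is the last one.\<close>
lemma prony_weight_inj:
  assumes x: "distinct x" "length x = n" and len: "length \<alpha> = n - d" "length \<beta> = n - d"
    and eq: "\<forall>y\<in>set x. prony_weight d x \<alpha> y = prony_weight d x \<beta> y"
  shows "\<alpha> = \<beta>"
proof (rule nth_equalityI)
  show "length \<alpha> = length \<beta>" using len by simp
  fix j assume "j < length \<alpha>"
  then show "\<alpha> ! j = \<beta> ! j"
  proof (induction j rule: less_induct)
    case (less j)
    define P where "P i = (\<Prod>z\<in>set (window x d i) - {x ! j}. x ! j - z)" for i
    define I where "I = {i\<in>{..<n - d}. x ! j \<in> set (window x d i)}"
    have windows: "i + d < length x" if "i < n - d" for i using that x len by linarith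
    have "j \<in> I" using less.prems len x by (auto simp: I_def nth_mem_set_window_iff windows)
    have earlier: "i < j" if "i \<in> I - {j}" for i
      using that less.prems len x by (auto simp: I_def nth_mem_set_window_iff windows)
    have split: "prony_weight d x \<gamma> (x ! j) = \<gamma> ! j / P j + (\<Sum>i\<in>I - {j}. \<gamma> ! i / P i)"
      if "length \<gamma> = n - d" for \<gamma>
      unfolding prony_weight_def that P_def[symmetric] I_def[symmetric]
      by (rule sum.remove) (use \<open>j \<in> I\<close> in \<open>auto simp: I_def\<close>)
    have "(\<Sum>i\<in>I - {j}. \<alpha> ! i / P i) = (\<Sum>i\<in>I - {j}. \<beta> ! i / P i)"
      using earlier less.IH less.prems by (intro sum.cong) auto
    moreover have "prony_weight d x \<alpha> (x ! j) = prony_weight d x \<beta> (x ! j)"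
      using eq less.prems len x by simp
    moreover have "P j \<noteq> 0" by (simp add: P_def)
    ultimately show ?case using split len by simp
  qed
qed

lemma solves_system_prony_map_iff:
  assumes x: "distinct x" "length x = n" and len: "length \<alpha> = n - d"
  shows "solves_system d n x (prony_map d n x \<alpha>) \<beta> \<longleftrightarrow> \<beta> = \<alpha>"
proof
  assume "solves_system d n x (prony_map d n x \<alpha>) \<beta>"
  then have len\<beta>: "length \<beta> = n - d"
    and b: "\<forall>r<n - d. b_vec d (prony_map d n x \<beta>) r = b_vec d (prony_map d n x \<alpha>) r"
    by (auto simp: solves_system_iff_b_vec)
  have "norm_seq d (prony_map d n x \<beta>) k = norm_seq d (prony_map d n x \<alpha>) k" if "k < n" for k
    using b[rule_format, of "k - d"] that by (cases "k < d") (simp_all add: norm_seq_def b_vec_eq_norm_seq)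
  then have "(\<Sum>y\<in>set x. (prony_weight d x \<beta> y - prony_weight d x \<alpha> y) * y ^ k) = 0" if "k < n" for k
    using that x len len\<beta> by (simp add: norm_seq_prony_map left_diff_distrib sum_subtractf)
  then have "\<forall>y\<in>set x. prony_weight d x \<beta> y = prony_weight d x \<alpha> y"
    using power_sums_eq_0_imp_weights_eq_0[of "set x" n "\<lambda>y. prony_weight d x \<beta> y - prony_weight d x \<alpha> y"]
      distinct_card[OF x(1)] x(2) by auto
  then show "\<beta> = \<alpha>" by (rule prony_weight_inj[OF x len\<beta> len])
qed (use len in \<open>auto simp: solves_system_iff_b_vec\<close>)

section \<open>Nonvanishing loci of polynomial functions\<close>

lemma poly_fun_sum:
  "finite A \<Longrightarrow> (\<And>a. a \<in> A \<Longrightarrow> f a \<in> poly_fun N) \<Longrightarrow> (\<lambda>v. \<Sum>a\<in>A. f a v) \<in> poly_fun N"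
  by (induction A rule: finite_induct) (auto intro: poly_fun.intros)

lemma poly_fun_prod:
  "finite A \<Longrightarrow> (\<And>a. a \<in> A \<Longrightarrow> f a \<in> poly_fun N) \<Longrightarrow> (\<lambda>v. \<Prod>a\<in>A. f a v) \<in> poly_fun N"
  by (induction A rule: finite_induct) (auto intro: poly_fun.intros)

lemma poly_fun_diff:
  assumes "f \<in> poly_fun N" "g \<in> poly_fun N"
  shows "(\<lambda>v. f v - g v) \<in> poly_fun N"
proof -
  have "(\<lambda>v. f v + (-1) * g v) \<in> poly_fun N"
    using assms by (intro poly_fun.intros)
  then show ?thesis by simp
qed

definition affine_line :: "nat \<Rightarrow> real list \<Rightarrow> real list \<Rightarrow> real \<Rightarrow> real list" where
  "affine_line N a b t = map (\<lambda>i. a ! i + t * (b ! i - a ! i)) [0..<N]"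

lemma length_affine_line [simp]: "length (affine_line N a b t) = N"
  by (simp add: affine_line_def)

lemma affine_line_0: "length a = N \<Longrightarrow> affine_line N a b 0 = a"
  by (intro nth_equalityI) (auto simp: affine_line_def)

lemma affine_line_1: "length b = N \<Longrightarrow> affine_line N a b 1 = b"
  by (intro nth_equalityI) (auto simp: affine_line_def)

lemma poly_fun_on_affine_line:
  "f \<in> poly_fun N \<Longrightarrow> \<exists>p. \<forall>t. f (affine_line N a b t) = poly p t"
proof (induction rule: poly_fun.induct)
  case (const c)
  show ?case by (rule exI[of _ "[:c:]"]) simp
next
  case (var i)
  then show ?case by (intro exI[of _ "[:a ! i, b ! i - a ! i:]"]) (simp add: affine_line_def)
next
  case (add f g)
  then obtain p q where "\<forall>t. f (affine_line N a b t) = poly p t" "\<forall>t. g (affine_line N a b t) = poly q t"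
    by blast
  then show ?case by (intro exI[of _ "p + q"]) simp
next
  case (mult f g)
  then obtain p q where "\<forall>t. f (affine_line N a b t) = poly p t" "\<forall>t. g (affine_line N a b t) = poly q t"
    by blast
  then show ?case by (intro exI[of _ "p * q"]) simp
qed

lemma zariski_open_nonvanishing:
  assumes "g \<in> poly_fun N"
  shows "zariski_open N {v \<in> affine_space N. g v \<noteq> 0}"
  unfolding zariski_open_def zariski_closed_def
  using assms by (intro conjI exI[of _ "{g}"]) auto

text \<open>On a line through a point where g is nonzero, a polynomial that vanishes wherever g does not
  has infinitely many roots.\<close>
lemma zariski_dense_nonvanishing:
  assumes g: "g \<in> poly_fun N" and v0: "length v0 = N" "g v0 \<noteq> 0"
  shows "zariski_dense N {v \<in> affine_space N. g v \<noteq> 0}"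
  unfolding zariski_dense_def
proof (intro allI impI)
  fix C assume "zariski_closed N C \<and> {v \<in> affine_space N. g v \<noteq> 0} \<subseteq> C"
  then obtain S where S: "S \<subseteq> poly_fun N" "C = {v \<in> affine_space N. \<forall>f\<in>S. f v = 0}"
    and UC: "{v \<in> affine_space N. g v \<noteq> 0} \<subseteq> C"
    unfolding zariski_closed_def by blast
  have "f v = 0" if v: "v \<in> affine_space N" and "f \<in> S" for f v
  proof -
    obtain pf where pf: "\<forall>t. f (affine_line N v0 v t) = poly pf t"
      using poly_fun_on_affine_line \<open>f \<in> S\<close> S(1) by blast
    obtain pg where pg: "\<forall>t. g (affine_line N v0 v t) = poly pg t"
      using poly_fun_on_affine_line g by blast
    have "pg \<noteq> 0" using pg affine_line_0[OF v0(1)] v0(2) by (metis poly_0)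
    have "poly pf t = 0" if "poly pg t \<noteq> 0" for t
    proof -
      have "affine_line N v0 v t \<in> C" using UC that pg by (auto simp: affine_space_def)
      then show ?thesis using S(2) \<open>f \<in> S\<close> pf by auto
    qed
    then have "UNIV \<subseteq> {t. poly pg t = 0} \<union> {t. poly pf t = 0}" by auto
    then have "pf = 0"
      using poly_roots_finite \<open>pg \<noteq> 0\<close> infinite_UNIV_char_0 finite_subset
      by (metis finite_Un)
    then show "f v = 0" using pf affine_line_1 v by (metis affine_space_def mem_Collect_eq poly_0)
  qed
  then show "C = affine_space N" using S(2) by auto
qed

section \<open>Generic pairs\<close>

definition window_neighbours :: "nat \<Rightarrow> nat \<Rightarrow> nat \<Rightarrow> nat set" where
  "window_neighbours d n l = {m. m < n \<and> m \<noteq> l \<and> l \<le> m + d \<and> m \<le> l + d}"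

definition windows_through :: "nat \<Rightarrow> nat \<Rightarrow> nat \<Rightarrow> nat set" where
  "windows_through d n l = {i. i < n - d \<and> i \<le> l \<and> l \<le> i + d}"

text \<open>For v = x @ \<alpha>, this is the weight of the node x ! l times the product of x ! l - x ! m over
  all nodes m sharing a window with l, which clears the denominators.\<close>
definition cleared_weight :: "nat \<Rightarrow> nat \<Rightarrow> nat \<Rightarrow> real list \<Rightarrow> real" where
  "cleared_weight d n l v =
     (\<Sum>i\<in>windows_through d n l. v ! (n + i) * (\<Prod>m\<in>window_neighbours d n l - {i..i + d}. v ! l - v ! m))"

definition prony_discriminant :: "nat \<Rightarrow> nat \<Rightarrow> real list \<Rightarrow> real" where
  "prony_discriminant d n v = (\<Prod>l<n. cleared_weight d n l v)"

definition generic_pairs :: "nat \<Rightarrow> nat \<Rightarrow> (real list \<times> real list) set" where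
  "generic_pairs d n = {(x, \<alpha>) \<in> pair_space d n. prony_discriminant d n (x @ \<alpha>) \<noteq> 0}"

lemma generic_pairs_lengths:
  "(x, \<alpha>) \<in> generic_pairs d n \<Longrightarrow> length x = n \<and> length \<alpha> = n - d"
  by (simp add: generic_pairs_def pair_space_def)

lemma finite_window_neighbours [simp]: "finite (window_neighbours d n l)"
  by (simp add: window_neighbours_def)

lemma finite_windows_through [simp]: "finite (windows_through d n l)"
  by (simp add: windows_through_def)

lemma prony_discriminant_poly_fun: "n \<ge> d \<Longrightarrow> prony_discriminant d n \<in> poly_fun (2 * n - d)"
  unfolding prony_discriminant_def[abs_def] cleared_weight_def
  by (intro poly_fun_prod poly_fun_sum poly_fun.mult poly_fun_diff poly_fun.var finite_lessThan)
     (auto simp: windows_through_def window_neighbours_def)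

text \<open>With x ! m = m and \<alpha> ! i = s ^ i, each cleared weight is a nonzero polynomial in s, since the
  windows through a node contribute distinct monomials.\<close>
lemma prony_discriminant_nonzero_somewhere:
  assumes "n \<ge> d + 1"
  shows "\<exists>v. length v = 2 * n - d \<and> prony_discriminant d n v \<noteq> 0"
proof -
  define c where "c l i = (\<Prod>m\<in>window_neighbours d n l - {i..i + d}. real l - real m)" for l i
  define Q where "Q l = (\<Sum>i\<in>windows_through d n l. monom (c l i) i)" for l
  have "Q l \<noteq> 0" if "l < n" for l
  proof -
    let ?i = "min l (n - d - 1)"
    have "?i \<in> windows_through d n l" using assms that by (auto simp: windows_through_def)
    then have "coeff (Q l) ?i = c l ?i"
      by (simp add: Q_def coeff_sum coeff_monom)
    moreover have "c l ?i \<noteq> 0" by (auto simp: c_def prod_zero_iff window_neighbours_def)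
    ultimately show ?thesis by auto
  qed
  then have "(\<Prod>l<n. Q l) \<noteq> 0" by (simp add: prod_zero_iff)
  then obtain s where s: "poly (\<Prod>l<n. Q l) s \<noteq> 0" using poly_all_0_iff_0 by blast
  define v where "v = map real [0..<n] @ map (\<lambda>i. s ^ i) [0..<n - d]"
  have "cleared_weight d n l v = poly (Q l) s" if "l < n" for l
    unfolding cleared_weight_def Q_def poly_sum
  proof (rule sum.cong)
    fix i assume "i \<in> windows_through d n l"
    moreover have "(\<Prod>m\<in>window_neighbours d n l - {i..i + d}. v ! l - v ! m) = c l i"
      unfolding c_def using that by (intro prod.cong) (auto simp: v_def nth_append window_neighbours_def)
    ultimately show "v ! (n + i) * (\<Prod>m\<in>window_neighbours d n l - {i..i + d}. v ! l - v ! m) =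
                     poly (monom (c l i) i) s"
      by (simp add: v_def nth_append windows_through_def poly_monom)
  qed simp
  then have "prony_discriminant d n v = poly (\<Prod>l<n. Q l) s"
    by (simp add: prony_discriminant_def poly_prod)
  moreover have "length v = 2 * n - d" using assms by (simp add: v_def)
  ultimately show ?thesis using s by auto
qed

lemma append_image_generic_pairs:
  assumes "n \<ge> d"
  shows "(\<lambda>(x, \<alpha>). x @ \<alpha>) ` generic_pairs d n =
         {v \<in> affine_space (2 * n - d). prony_discriminant d n v \<noteq> 0}"
proof (intro equalityI subsetI)
  fix v assume "v \<in> {v \<in> affine_space (2 * n - d). prony_discriminant d n v \<noteq> 0}"
  then have "(take n v, drop n v) \<in> generic_pairs d n"
    using assms by (auto simp: generic_pairs_def pair_space_def affine_space_def)
  then show "v \<in> (\<lambda>(x, \<alpha>). x @ \<alpha>) ` generic_pairs d n"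
    by (auto intro!: image_eqI[of _ _ "(take n v, drop n v)"])
qed (use assms in \<open>auto simp: generic_pairs_def pair_space_def affine_space_def\<close>)

lemma generic_pairs_zariski_open_dense:
  assumes "n \<ge> d + 1"
  shows "zariski_open_dense_pairs d n (generic_pairs d n)"
proof -
  obtain v0 where "length v0 = 2 * n - d" "prony_discriminant d n v0 \<noteq> 0"
    using prony_discriminant_nonzero_somewhere[OF assms] by blast
  moreover have "prony_discriminant d n \<in> poly_fun (2 * n - d)"
    using assms by (intro prony_discriminant_poly_fun) simp
  ultimately show ?thesis
    unfolding zariski_open_dense_pairs_def append_image_generic_pairs[OF order.trans[OF le_add1 assms]]
    by (auto simp: generic_pairs_def intro: zariski_open_nonvanishing zariski_dense_nonvanishing)
qed

lemma cleared_weight_eq: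
  assumes x: "distinct x" "length x = n" and len: "length \<alpha> = n - d" and "l < n"
  shows "cleared_weight d n l (x @ \<alpha>) =
         prony_weight d x \<alpha> (x ! l) * (\<Prod>m\<in>window_neighbours d n l. x ! l - x ! m)"
proof -
  have windows: "i + d < length x" if "i < n - d" for i using that x by linarith
  have through: "{i\<in>{..<length \<alpha>}. x ! l \<in> set (window x d i)} = windows_through d n l"
    using assms by (auto simp: windows_through_def nth_mem_set_window_iff windows)
  have "\<alpha> ! i / (\<Prod>z\<in>set (window x d i) - {x ! l}. x ! l - z) * (\<Prod>m\<in>window_neighbours d n l. x ! l - x ! m) =
        (x @ \<alpha>) ! (n + i) * (\<Prod>m\<in>window_neighbours d n l - {i..i + d}. (x @ \<alpha>) ! l - (x @ \<alpha>) ! m)"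
    if i: "i \<in> windows_through d n l" for i
  proof -
    have i': "i < n - d" "i \<le> l" "l \<le> i + d" using i by (auto simp: windows_through_def)
    have window_prod: "(\<Prod>z\<in>set (window x d i) - {x ! l}. x ! l - z) = (\<Prod>m\<in>{i..i + d} - {l}. x ! l - x ! m)"
      using i' by (intro prod_window_remove_node[OF x(1) windows]) auto
    have "{i..i + d} - {l} \<subseteq> window_neighbours d n l" using i' x by (auto simp: window_neighbours_def)
    then have "(\<Prod>m\<in>window_neighbours d n l. x ! l - x ! m) =
               (\<Prod>m\<in>window_neighbours d n l - ({i..i + d} - {l}). x ! l - x ! m) * (\<Prod>m\<in>{i..i + d} - {l}. x ! l - x ! m)"
      by (intro prod.subset_diff) simp_all
    moreover have "window_neighbours d n l - ({i..i + d} - {l}) = window_neighbours d n l - {i..i + d}"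
      by (auto simp: window_neighbours_def)
    moreover have "(\<Prod>m\<in>{i..i + d} - {l}. x ! l - x ! m) \<noteq> 0"
      using x i' \<open>l < n\<close> by (auto simp: prod_zero_iff nth_eq_iff_index_eq)
    moreover have "(\<Prod>m\<in>window_neighbours d n l - {i..i + d}. (x @ \<alpha>) ! l - (x @ \<alpha>) ! m) =
                   (\<Prod>m\<in>window_neighbours d n l - {i..i + d}. x ! l - x ! m)"
      using x \<open>l < n\<close> by (intro prod.cong) (auto simp: nth_append window_neighbours_def)
    ultimately show ?thesis using x by (simp add: window_prod nth_append)
  qed
  then show ?thesis
    unfolding cleared_weight_def prony_weight_def through sum_distrib_right by simp
qed

lemma prony_weight_nonzero_if_generic:
  assumes "(x, \<alpha>) \<in> generic_pairs d n" "distinct x" "y \<in> set x"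
  shows "prony_weight d x \<alpha> y \<noteq> 0"
proof -
  note len = generic_pairs_lengths[OF assms(1)]
  obtain l where l: "l < n" "y = x ! l" using assms(3) len by (auto simp: in_set_conv_nth)
  then have "cleared_weight d n l (x @ \<alpha>) \<noteq> 0"
    using assms(1) by (auto simp: generic_pairs_def prony_discriminant_def)
  then show ?thesis
    using cleared_weight_eq[OF assms(2) conjunct1[OF len] conjunct2[OF len] l(1)] l(2) by auto
qed

section \<open>Simplex measures and the spline cone\<close>

abbreviation lborel_pow :: "nat \<Rightarrow> (nat \<Rightarrow> real) measure" where
  "lborel_pow d \<equiv> PiM {..<d} (\<lambda>_. lborel)"

definition simplex_point :: "nat \<Rightarrow> real list \<Rightarrow> (nat \<Rightarrow> real) \<Rightarrow> real" where
  "simplex_point d V l = (\<Sum>k<d. l k * V ! k) + (1 - (\<Sum>k<d. l k)) * V ! d"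

lemma simplex_measure_eq_distr:
  "simplex_measure d V = distr (uniform_measure (lborel_pow d) (simplex_param d)) borel (simplex_point d V)"
  by (simp add: simplex_measure_def simplex_point_def[abs_def])

lemma simplex_param_sets: "simplex_param d \<in> sets (lborel_pow d)"
proof -
  have "simplex_param d = {l \<in> space (lborel_pow d). (\<forall>k<d. 0 \<le> l k) \<and> (\<Sum>k<d. l k) \<le> 1}"
    by (simp add: simplex_param_def space_PiM)
  also have "\<dots> \<in> sets (lborel_pow d)" by measurable
  finally show ?thesis .
qed

lemma simplex_point_measurable [measurable]: "simplex_point d V \<in> borel_measurable (lborel_pow d)"
  unfolding simplex_point_def by measurable

lemma emeasure_lborel_pow_box:
  assumes "\<And>k. k < d \<Longrightarrow> a k \<le> b k"
  shows "emeasure (lborel_pow d) (PiE {..<d} (\<lambda>k. {a k..b k})) = ennreal (\<Prod>k<d. b k - a k)"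
proof -
  interpret product_sigma_finite "\<lambda>_. lborel :: real measure"
    by (simp add: product_sigma_finite_def sigma_finite_lborel)
  have "emeasure (lborel_pow d) (PiE {..<d} (\<lambda>k. {a k..b k})) = (\<Prod>k<d. emeasure lborel {a k..b k})"
    by (rule emeasure_PiM) auto
  also have "\<dots> = (\<Prod>k<d. ennreal (b k - a k))" using assms by (intro prod.cong) auto
  also have "\<dots> = ennreal (\<Prod>k<d. b k - a k)" using assms by (intro prod_ennreal) auto
  finally show ?thesis .
qed

lemma emeasure_lborel_pow_nonzero_if_box_subset:
  assumes "\<And>k. k < d \<Longrightarrow> a k < b k" "PiE {..<d} (\<lambda>k. {a k..b k}) \<subseteq> A" "A \<in> sets (lborel_pow d)"
  shows "emeasure (lborel_pow d) A \<noteq> 0"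
proof -
  have "0 < (\<Prod>k<d. b k - a k)" by (rule prod_pos) (use assms(1) in auto)
  then have "0 < ennreal (\<Prod>k<d. b k - a k)" by simp
  also have "\<dots> = emeasure (lborel_pow d) (PiE {..<d} (\<lambda>k. {a k..b k}))"
    using emeasure_lborel_pow_box[of d a b] assms(1) by (simp add: less_imp_le)
  also have "\<dots> \<le> emeasure (lborel_pow d) A" by (rule emeasure_mono[OF assms(2,3)])
  finally show ?thesis by simp
qed

lemma emeasure_simplex_param_finite: "emeasure (lborel_pow d) (simplex_param d) \<noteq> \<infinity>"
proof -
  have "simplex_param d \<subseteq> PiE {..<d} (\<lambda>_. {0..1})"
  proof
    fix l assume l: "l \<in> simplex_param d"
    then have "l k \<le> 1" if "k < d" for k
      using that member_le_sum[of k "{..<d}" l] by (force simp: simplex_param_def)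
    with l show "l \<in> PiE {..<d} (\<lambda>_. {0..1})" by (auto simp: simplex_param_def PiE_def Pi_def)
  qed
  then have "emeasure (lborel_pow d) (simplex_param d) \<le> emeasure (lborel_pow d) (PiE {..<d} (\<lambda>_. {0..1}))"
    by (rule emeasure_mono) (simp add: sets_PiM_I_finite)
  also have "\<dots> = 1" using emeasure_lborel_pow_box[of d "\<lambda>_. 0" "\<lambda>_. 1"] by simp
  finally show ?thesis by (auto simp: top_unique)
qed

lemma emeasure_simplex_param_nonzero: "emeasure (lborel_pow d) (simplex_param d) \<noteq> 0"
proof (rule emeasure_lborel_pow_nonzero_if_box_subset[of d "\<lambda>_. 0" "\<lambda>_. 1 / (real d + 1)"])
  show "PiE {..<d} (\<lambda>k. {0..1 / (real d + 1)}) \<subseteq> simplex_param d"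
  proof
    fix l assume l: "l \<in> PiE {..<d} (\<lambda>k. {0..1 / (real d + 1)})"
    have "(\<Sum>k<d. l k) \<le> (\<Sum>k<d. 1 / (real d + 1))" using l by (intro sum_mono) (auto simp: PiE_def Pi_def)
    also have "\<dots> \<le> 1" by (simp add: field_simps)
    finally show "l \<in> simplex_param d" using l by (auto simp: simplex_param_def PiE_def Pi_def)
  qed
qed (simp_all add: simplex_param_sets)

lemma measure_simplex_measure:
  assumes "B \<in> sets borel"
  shows "measure (simplex_measure d V) B =
     measure (lborel_pow d) (simplex_param d \<inter> simplex_point d V -` B \<inter> space (lborel_pow d)) /
     measure (lborel_pow d) (simplex_param d)"
proof -
  have "measure (simplex_measure d V) B =
      measure (uniform_measure (lborel_pow d) (simplex_param d)) (simplex_point d V -` B \<inter> space (lborel_pow d))"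
    unfolding simplex_measure_eq_distr using assms
    by (subst measure_distr) (simp_all add: space_uniform_measure)
  also have "\<dots> = measure (lborel_pow d) (simplex_param d \<inter> simplex_point d V -` B \<inter> space (lborel_pow d)) /
     measure (lborel_pow d) (simplex_param d)"
    using emeasure_simplex_param_nonzero emeasure_simplex_param_finite assms
    by (subst measure_uniform_measure) (measurable, simp_all add: Int_assoc)
  finally show ?thesis .
qed

lemma measure_simplex_measure_eq_0:
  assumes "B \<in> sets borel" "\<forall>l\<in>simplex_param d. simplex_point d V l \<notin> B"
  shows "measure (simplex_measure d V) B = 0"
proof -
  have "simplex_param d \<inter> simplex_point d V -` B \<inter> space (lborel_pow d) = {}" using assms(2) by auto
  then show ?thesis by (simp add: measure_simplex_measure[OF assms(1)])
qed

lemma measure_simplex_measure_pos: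
  assumes B: "B \<in> sets borel"
    and nonzero: "emeasure (lborel_pow d) (simplex_param d \<inter> simplex_point d V -` B \<inter> space (lborel_pow d)) \<noteq> 0"
  shows "measure (simplex_measure d V) B > 0"
proof -
  let ?A = "simplex_param d \<inter> simplex_point d V -` B \<inter> space (lborel_pow d)"
  have "emeasure (lborel_pow d) ?A \<le> emeasure (lborel_pow d) (simplex_param d)"
    by (rule emeasure_mono) (auto simp: simplex_param_sets)
  then have "emeasure (lborel_pow d) ?A \<noteq> \<infinity>"
    using emeasure_simplex_param_finite by (auto simp: top_unique)
  then have "measure (lborel_pow d) ?A > 0"
    using nonzero by (simp add: measure_def enn2real_positive_iff less_top zero_less_iff_neq_zero)
  moreover have "measure (lborel_pow d) (simplex_param d) > 0"
    using emeasure_simplex_param_nonzero emeasure_simplex_param_finite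
    by (simp add: measure_def enn2real_positive_iff less_top zero_less_iff_neq_zero)
  ultimately show ?thesis unfolding measure_simplex_measure[OF B] by simp
qed

lemma simplex_point_minus_first:
  "simplex_point d V l - V ! 0 = (\<Sum>k<d. l k * (V ! k - V ! 0)) + (1 - (\<Sum>k<d. l k)) * (V ! d - V ! 0)"
proof -
  have "(\<Sum>k<d. l k * V ! 0) = (\<Sum>k<d. l k) * V ! 0" by (simp add: sum_distrib_right)
  then show ?thesis by (simp add: simplex_point_def algebra_simps sum_subtractf)
qed

lemma simplex_point_ge_first:
  assumes "l \<in> simplex_param d" "\<forall>k\<le>d. V ! 0 \<le> V ! k"
  shows "V ! 0 \<le> simplex_point d V l"
proof -
  have "0 \<le> (\<Sum>k<d. l k * (V ! k - V ! 0)) + (1 - (\<Sum>k<d. l k)) * (V ! d - V ! 0)"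
    using assms by (intro add_nonneg_nonneg sum_nonneg mult_nonneg_nonneg) (auto simp: simplex_param_def)
  then show ?thesis using simplex_point_minus_first[of d V l] by simp
qed

lemma simplex_point_le:
  assumes l: "l \<in> simplex_param d" and V: "\<forall>k\<le>d. V ! 0 \<le> V ! k \<and> V ! k \<le> V ! d" and "d \<ge> 1"
  shows "simplex_point d V l - V ! 0 \<le> (1 - l 0) * (V ! d - V ! 0)"
proof -
  define R where "R = V ! d - V ! 0"
  have l0: "0 \<in> {..<d}" using \<open>d \<ge> 1\<close> by simp
  have "(\<Sum>k<d. l k * (V ! k - V ! 0)) \<le> (\<Sum>k<d. (if k = 0 then 0 else l k * R))"
    using l V by (intro sum_mono) (auto simp: R_def simplex_param_def intro!: mult_left_mono)
  also have "\<dots> = (\<Sum>k<d. l k * R) - l 0 * R"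
    using sum.remove[OF finite_lessThan l0, of "\<lambda>k. l k * R"] sum.remove[OF finite_lessThan l0, of "\<lambda>k. if k = 0 then 0 else l k * R"]
    by simp
  finally have "simplex_point d V l - V ! 0 \<le> (\<Sum>k<d. l k * R) - l 0 * R + (1 - (\<Sum>k<d. l k)) * R"
    using simplex_point_minus_first[of d V l] by (simp add: R_def)
  also have "\<dots> = (1 - l 0) * R" by (simp add: sum_distrib_right[symmetric] left_diff_distrib)
  finally show ?thesis by (simp add: R_def)
qed

lemma corner_box_subset_simplex_param:
  assumes "d \<ge> 1" "0 < \<epsilon>" "\<epsilon> \<le> 1"
  shows "PiE {..<d} (\<lambda>k. {if k = 0 then 1 - \<epsilon> else 0 .. if k = 0 then 1 - \<epsilon> / 2 else \<epsilon> / (2 * real d)})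
           \<subseteq> simplex_param d"
proof
  fix l assume l: "l \<in> PiE {..<d} (\<lambda>k. {if k = 0 then 1 - \<epsilon> else 0 .. if k = 0 then 1 - \<epsilon> / 2 else \<epsilon> / (2 * real d)})"
  define \<delta> where "\<delta> = \<epsilon> / (2 * real d)"
  have \<delta>: "0 \<le> \<delta>" "real d * \<delta> = \<epsilon> / 2" using assms by (simp_all add: \<delta>_def)
  have bounds: "(if k = 0 then 1 - \<epsilon> else 0) \<le> l k \<and> l k \<le> (if k = 0 then 1 - \<epsilon> / 2 else \<delta>)"
    if "k < d" for k
    using l that by (auto simp: PiE_def Pi_def \<delta>_def)
  then have "l k \<le> (if k = 0 then 1 - \<epsilon> / 2 else 0) + \<delta>" if "k < d" for k
    using that \<delta>(1) by (cases "k = 0") fastforce+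
  then have "(\<Sum>k<d. l k) \<le> (\<Sum>k<d. (if k = 0 then 1 - \<epsilon> / 2 else 0) + \<delta>)"
    by (intro sum_mono) auto
  also have "\<dots> = 1" using assms \<delta>(2) by (simp add: sum.distrib)
  finally have "(\<Sum>k<d. l k) \<le> 1" .
  moreover have "0 \<le> l k" if "k < d" for k
    using bounds[OF that] assms by (auto split: if_splits)
  ultimately show "l \<in> simplex_param d" using l by (auto simp: simplex_param_def PiE_def Pi_def)
qed

text \<open>Near the vertex of the simplex that is mapped to V ! 0 lies a box of positive volume mapped
  into [V ! 0, b).\<close>
lemma measure_simplex_measure_pos_above_first:
  assumes V: "\<forall>k\<le>d. V ! 0 \<le> V ! k \<and> V ! k \<le> V ! d" and "V ! 0 < b"
    and B: "B \<in> sets borel" "{V ! 0..<b} \<subseteq> B"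
  shows "measure (simplex_measure d V) B > 0"
proof (rule measure_simplex_measure_pos[OF B(1)])
  let ?A = "simplex_param d \<inter> simplex_point d V -` B \<inter> space (lborel_pow d)"
  have A: "?A \<in> sets (lborel_pow d)" using simplex_param_sets B(1) by measurable
  have into_B: "l \<in> ?A" if "l \<in> simplex_param d" "simplex_point d V l < b" for l
    using that V B(2) simplex_point_ge_first[of l d V] by (auto simp: simplex_param_def space_PiM)
  show "emeasure (lborel_pow d) ?A \<noteq> 0"
  proof (cases "d = 0")
    case True
    then have "?A = simplex_param d"
      using into_B \<open>V ! 0 < b\<close> by (auto simp: simplex_point_def)
    then show ?thesis using emeasure_simplex_param_nonzero by simp
  next
    case False
    define R where "R = V ! d - V ! 0"
    define \<gamma> where "\<gamma> = b - V ! 0"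
    define \<epsilon> where "\<epsilon> = \<gamma> / (2 * (R + \<gamma>))"
    have "R \<ge> 0" "\<gamma> > 0" using V \<open>V ! 0 < b\<close> by (simp_all add: R_def \<gamma>_def)
    then have \<epsilon>: "0 < \<epsilon>" "\<epsilon> \<le> 1" and "\<epsilon> * (R + \<gamma>) = \<gamma> / 2"
      by (simp_all add: \<epsilon>_def field_simps)
    moreover have "\<epsilon> * R \<le> \<epsilon> * (R + \<gamma>)" using \<epsilon> \<open>\<gamma> > 0\<close> by (intro mult_left_mono) auto
    ultimately have "\<epsilon> * R < \<gamma>" using \<open>\<gamma> > 0\<close> by linarith
    then have "\<epsilon> * R < b - V ! 0" by (simp add: \<gamma>_def)
    show ?thesis
    proof (rule emeasure_lborel_pow_nonzero_if_box_subset[OF _ _ A])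
      show "PiE {..<d} (\<lambda>k. {if k = 0 then 1 - \<epsilon> else 0 .. if k = 0 then 1 - \<epsilon> / 2 else \<epsilon> / (2 * real d)}) \<subseteq> ?A"
      proof
        fix l assume l: "l \<in> PiE {..<d} (\<lambda>k. {if k = 0 then 1 - \<epsilon> else 0 .. if k = 0 then 1 - \<epsilon> / 2 else \<epsilon> / (2 * real d)})"
        then have "l \<in> simplex_param d"
          using corner_box_subset_simplex_param[of d \<epsilon>] False \<epsilon> by auto
        moreover have "1 - \<epsilon> \<le> l 0" using l False by (auto simp: PiE_def Pi_def)
        then have "(1 - l 0) * R \<le> \<epsilon> * R" using \<open>R \<ge> 0\<close> by (intro mult_right_mono) auto
        then have "simplex_point d V l - V ! 0 \<le> \<epsilon> * R"
          using simplex_point_le[OF \<open>l \<in> simplex_param d\<close> V] False by (simp add: R_def)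
        ultimately show "l \<in> ?A" using into_B \<open>\<epsilon> * R < b - V ! 0\<close> by simp
      qed
    qed (use \<epsilon> False in auto)
  qed
qed

lemma window_sorted:
  assumes "sorted_wrt (<) x" "i + d < length x"
  shows "\<forall>k\<le>d. window x d i ! 0 \<le> window x d i ! k \<and> window x d i ! k \<le> window x d i ! d"
  using assms strict_sorted_imp_sorted[OF assms(1)] by (auto simp: nth_window intro!: sorted_nth_mono)

text \<open>Window i gives this set positive measure and the later windows give it measure zero.\<close>
definition spline_test_set :: "real list \<Rightarrow> nat \<Rightarrow> real set" where
  "spline_test_set x i = (if Suc i < length x then {..< x ! Suc i} else UNIV)"

lemma measure_window_spline_test_set_eq_0:
  assumes x: "sorted_wrt (<) x" and "j + d < length x" "i < j"
  shows "measure (simplex_measure d (window x d j)) (spline_test_set x i) = 0"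
proof (rule measure_simplex_measure_eq_0)
  have "x ! Suc i \<le> x ! j"
    using assms by (cases "Suc i = j") (auto simp: sorted_wrt_iff_nth_less less_imp_le)
  then show "\<forall>l\<in>simplex_param d. simplex_point d (window x d j) l \<notin> spline_test_set x i"
    using simplex_point_ge_first window_sorted[OF assms(1,2)] nth_window[OF assms(2), of 0] assms
    by (fastforce simp: spline_test_set_def)
qed (simp add: spline_test_set_def)

lemma measure_window_spline_test_set_pos:
  assumes x: "sorted_wrt (<) x" and "i + d < length x"
  shows "measure (simplex_measure d (window x d i)) (spline_test_set x i) > 0"
proof (rule measure_simplex_measure_pos_above_first[OF window_sorted[OF assms]])
  let ?b = "if Suc i < length x then x ! Suc i else x ! i + 1"
  show "window x d i ! 0 < ?b" "{window x d i ! 0..<?b} \<subseteq> spline_test_set x i"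
    using assms by (auto simp: nth_window sorted_wrt_iff_nth_less spline_test_set_def)
qed (simp add: spline_test_set_def)

lemma spline_combination_inj:
  assumes x: "sorted_wrt (<) x" and len: "length \<alpha> = length \<beta>" "\<forall>i<length \<alpha>. i + d < length x"
    and eq: "\<forall>A\<in>sets borel. spline_combination d x \<alpha> A = spline_combination d x \<beta> A"
  shows "\<alpha> = \<beta>"
proof (rule nth_equalityI)
  show "length \<alpha> = length \<beta>" by (fact len(1))
  define \<mu> where "\<mu> i j = measure (simplex_measure d (window x d j)) (spline_test_set x i)" for i j
  fix i assume "i < length \<alpha>"
  then show "\<alpha> ! i = \<beta> ! i"
  proof (induction i rule: less_induct)
    case (less i)
    have "(\<Sum>j<length \<alpha>. (\<alpha> ! j - \<beta> ! j) * \<mu> i j) = 0"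
      using eq[rule_format, of "spline_test_set x i"] len
      by (simp add: spline_combination_def \<mu>_def spline_test_set_def left_diff_distrib sum_subtractf)
    moreover have "(\<Sum>j<length \<alpha>. (\<alpha> ! j - \<beta> ! j) * \<mu> i j) = (\<alpha> ! i - \<beta> ! i) * \<mu> i i"
    proof -
      have vanish: "(\<alpha> ! j - \<beta> ! j) * \<mu> i j = 0" if "j \<in> {..<length \<alpha>} - {i}" for j
      proof (cases "j < i")
        case False
        then show ?thesis
          using that len x by (simp add: \<mu>_def measure_window_spline_test_set_eq_0)
      qed (use less.IH less.prems in simp)
      have "(\<Sum>j\<in>{..<length \<alpha>} - {i}. (\<alpha> ! j - \<beta> ! j) * \<mu> i j) = 0"
        by (rule sum.neutral) (use vanish in blast)
      then show ?thesis
        using sum.remove[of "{..<length \<alpha>}" i "\<lambda>j. (\<alpha> ! j - \<beta> ! j) * \<mu> i j"] less.prems by simp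
    qed
    moreover have "\<mu> i i > 0"
      using measure_window_spline_test_set_pos[OF x] len less.prems by (simp add: \<mu>_def)
    ultimately show ?case by simp
  qed
qed

lemma in_spline_cone_iff_nonneg:
  assumes x: "sorted_wrt (<) x" and len: "length \<alpha> = length x - d"
  shows "in_spline_cone d x (spline_combination d x \<alpha>) \<longleftrightarrow> (\<forall>i<length \<alpha>. 0 \<le> \<alpha> ! i)"
proof
  assume "in_spline_cone d x (spline_combination d x \<alpha>)"
  then obtain \<beta> where \<beta>: "length \<beta> = length x - d" "\<forall>i<length \<beta>. 0 \<le> \<beta> ! i"
    and eq: "\<forall>A\<in>sets borel. spline_combination d x \<alpha> A = spline_combination d x \<beta> A"
    unfolding in_spline_cone_def by blast
  have "\<alpha> = \<beta>"
    using len \<beta>(1) by (intro spline_combination_inj[OF x _ _ eq]) auto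
  then show "\<forall>i<length \<alpha>. 0 \<le> \<alpha> ! i" using \<beta>(2) by simp
qed (use len in \<open>auto simp: in_spline_cone_def\<close>)

section \<open>Recovering the nodes and coefficients\<close>

lemma vanishing_coeffs_inj:
  assumes "finite X" "card X = n" "finite Y" "card Y = n"
    and "vanishing_coeffs n X = vanishing_coeffs n Y"
  shows "X = Y"
proof -
  obtain u where "u \<in> vanishing_coeffs n X" "u \<noteq> replicate (Suc n) 0"
    using vanishing_coeffs_one_dimensional[OF assms(1,2)] by blast
  then show ?thesis
    using roots_vanishing_coeffs[OF assms(1,2)] roots_vanishing_coeffs[OF assms(3,4)] assms(5) by metis
qed

lemma hankel_kernel_prony_map_generic:
  assumes "(x, \<alpha>) \<in> generic_pairs d n" "distinct x"
  shows "hankel_kernel d n (prony_map d n x \<alpha>) = vanishing_coeffs n (set x)"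
  using assms generic_pairs_lengths[OF assms(1)] prony_weight_nonzero_if_generic[OF assms]
  by (intro hankel_kernel_prony_map) auto

lemma prony_map_inj_on:
  "inj_on (\<lambda>(x, \<alpha>). prony_map d n x \<alpha>) {(x, \<alpha>) \<in> generic_pairs d n. sorted_wrt (<) x}"
proof (rule inj_onI, clarify)
  fix x \<alpha> x' \<alpha>'
  assume generic: "(x, \<alpha>) \<in> generic_pairs d n" "(x', \<alpha>') \<in> generic_pairs d n"
    and sorted: "sorted_wrt (<) x" "sorted_wrt (<) x'"
    and eq: "prony_map d n x \<alpha> = prony_map d n x' \<alpha>'"
  have distinct: "distinct x" "distinct x'" using sorted strict_sorted_iff by blast+
  note len = generic_pairs_lengths[OF generic(1)] generic_pairs_lengths[OF generic(2)]
  have "vanishing_coeffs n (set x) = vanishing_coeffs n (set x')"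
    using hankel_kernel_prony_map_generic[OF generic(1) distinct(1)]
      hankel_kernel_prony_map_generic[OF generic(2) distinct(2)] eq by simp
  then have "set x = set x'"
    using distinct len by (intro vanishing_coeffs_inj) (simp_all add: distinct_card)
  then have "x = x'" using sorted by (simp add: strict_sorted_iff sorted_distinct_set_unique)
  moreover have "solves_system d n x (prony_map d n x \<alpha>) \<alpha>'"
    using solves_system_prony_map_iff[of x' n \<alpha>' d \<alpha>'] distinct len eq \<open>x = x'\<close> by simp
  ultimately show "x = x' \<and> \<alpha> = \<alpha>'"
    using solves_system_prony_map_iff[of x n \<alpha> d \<alpha>'] distinct len by simp
qed

lemma prony_fiber_properties:
  assumes generic: "(x, \<alpha>) \<in> generic_pairs d n" and sorted: "sorted_wrt (<) x"
  shows "(\<exists>u \<in> hankel_kernel d n (prony_map d n x \<alpha>). u \<noteq> replicate (Suc n) 0 \<and>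
             (\<forall>v \<in> hankel_kernel d n (prony_map d n x \<alpha>). \<exists>t::real. v = map (\<lambda>a. t * a) u)) \<and>
         (\<forall>u \<in> hankel_kernel d n (prony_map d n x \<alpha>). u \<noteq> replicate (Suc n) 0 \<longrightarrow>
             {t. poly (Poly u) t = 0} = set x) \<and>
         (\<forall>\<beta>. solves_system d n x (prony_map d n x \<alpha>) \<beta> \<longleftrightarrow> \<beta> = \<alpha>) \<and>
         (in_spline_cone d x (spline_combination d x \<alpha>) \<longleftrightarrow>
             (\<forall>i<n - d. 0 \<le> (THE \<beta>. solves_system d n x (prony_map d n x \<alpha>) \<beta>) ! i))"
proof -
  have distinct: "distinct x" using sorted strict_sorted_iff by blast
  note len = generic_pairs_lengths[OF generic]
  have card: "card (set x) = n" using distinct len distinct_card by blast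
  have solves: "\<forall>\<beta>. solves_system d n x (prony_map d n x \<alpha>) \<beta> \<longleftrightarrow> \<beta> = \<alpha>"
    using solves_system_prony_map_iff[OF distinct] len by blast
  then have "(THE \<beta>. solves_system d n x (prony_map d n x \<alpha>) \<beta>) = \<alpha>" by simp
  then show ?thesis
    unfolding hankel_kernel_prony_map_generic[OF generic distinct]
    using vanishing_coeffs_one_dimensional[OF _ card] roots_vanishing_coeffs[OF _ card] solves
      in_spline_cone_iff_nonneg[OF sorted] len
    by simp
qed

theorem theorem2p14:
  fixes d n :: nat
  assumes "n \<ge> d + 1"
  shows "\<exists>U. zariski_open_dense_pairs d n U \<and>
    (let S = {(x, \<alpha>) \<in> U. sorted_wrt (<) x \<and> (\<forall>i<n - d. \<alpha> ! i \<noteq> 0)} in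
      inj_on (\<lambda>(x, \<alpha>). prony_map d n x \<alpha>) S \<and>
      (\<forall>(x, \<alpha>) \<in> S. let M = prony_map d n x \<alpha> in
         (\<exists>u \<in> hankel_kernel d n M. u \<noteq> replicate (Suc n) 0 \<and>
             (\<forall>v \<in> hankel_kernel d n M. \<exists>t::real. v = map (\<lambda>a. t * a) u)) \<and>
         (\<forall>u \<in> hankel_kernel d n M. u \<noteq> replicate (Suc n) 0 \<longrightarrow>
             {t. poly (Poly u) t = 0} = set x) \<and>
         (\<forall>\<beta>. solves_system d n x M \<beta> \<longleftrightarrow> \<beta> = \<alpha>) \<and>
         (in_spline_cone d x (spline_combination d x \<alpha>) \<longleftrightarrow>
             (\<forall>i<n - d. 0 \<le> (THE \<beta>. solves_system d n x M \<beta>) ! i))))"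
  unfolding Let_def
proof (intro exI[of _ "generic_pairs d n"] conjI ballI)
  show "zariski_open_dense_pairs d n (generic_pairs d n)"
    using assms by (rule generic_pairs_zariski_open_dense)
qed (blast intro: inj_on_subset[OF prony_map_inj_on], clarify, rule prony_fiber_properties)

end
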